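(* Let $n_{k'}\le n_k$. Then $\ker(Z_{k,k'}^*Z_{k,k'})=\ker Z_{k,k'}=\mathrm{span}\{\varphi_{a_k}:a=n_{k'},\dots,n_k-1\}$, where kernels are taken of the operators restricted to $E_k$.
   Context: Let $\mathcal H$ be a finite-dimensional complex Hilbert space and $E_k,E_{k'}$ mutually orthogonal subspaces with $n_k=\dim E_k$, $n_{k'}=\dim E_{k'}$ and orthonormal bases $\{|a_k\rangle:0\le a\le n_k-1\}$, $\{|b_{k'}\rangle:0\le b\le n_{k'}-1\}$. For vectors $x,y$, $|x\rangle\langle y|$ is the operator $u\mapsto\langle y,u\rangle x$. $\zeta_k=e^{2\pi i/n_k}$. The transition operator is $Z_{k,k'}=n_k^{-1/2}\sum_{b=0}^{n_{k'}-1}\sum_{a=0}^{n_k-1}\zeta_k^{ba}|b_{k'}\rangle\langle a_k|$, and the $k$-entangled basis is $\varphi_{a_k}=n_k^{-1/2}\sum_{b=0}^{n_k-1}\zeta_k^{-ba}|b_k\rangle$, $0\le a\le n_k-1$. *)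

theory Defs
  imports Complex_Main "Jordan_Normal_Form.Schur_Decomposition"
begin

text \<open>The finite-dimensional complex Hilbert space H is modelled as C^m
  (complex vectors of dimension m) with the standard inner product
  <y,u> = u \<bullet>c y = sum_i cnj (y_i) * u_i; operators are m x m complex matrices,
  and the adjoint is the conjugate transpose mat_adjoint.\<close>

definition ketbra :: "complex vec \<Rightarrow> complex vec \<Rightarrow> complex mat" where
  "ketbra x y = mat (dim_vec x) (dim_vec y) (\<lambda>(i,j). x $ i * cnj (y $ j))"

definition msum :: "nat \<Rightarrow> nat \<Rightarrow> (nat \<Rightarrow> complex mat) \<Rightarrow> nat \<Rightarrow> complex mat" where
  "msum nr nc f N = foldr (\<lambda>i acc. f i + acc) [0..<N] (0\<^sub>m nr nc)"

definition cspan :: "nat \<Rightarrow> (nat \<Rightarrow> complex vec) \<Rightarrow> nat set \<Rightarrow> complex vec set" where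
  "cspan m v I = {finsum_vec TYPE(complex) m (\<lambda>i. c i \<cdot>\<^sub>v v i) I | c. True}"

definition orthonormal_fam :: "nat \<Rightarrow> (nat \<Rightarrow> complex vec) \<Rightarrow> nat \<Rightarrow> bool" where
  "orthonormal_fam m e n \<longleftrightarrow> (\<forall>i<n. e i \<in> carrier_vec m) \<and>
     (\<forall>i<n. \<forall>j<n. e i \<bullet>c e j = (if i = j then 1 else 0))"

definition zeta :: "nat \<Rightarrow> complex" where
  "zeta n = exp (2 * complex_of_real pi * \<i> / of_nat n)"

text \<open>Transition operator Z_{k,k'} (a : basis of E_k, b : basis of E_k').\<close>
definition transition_op :: "nat \<Rightarrow> (nat \<Rightarrow> complex vec) \<Rightarrow> nat \<Rightarrow> (nat \<Rightarrow> complex vec) \<Rightarrow> nat \<Rightarrow> complex mat" where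
  "transition_op m a nk b nk' =
     complex_of_real (1 / sqrt (real nk)) \<cdot>\<^sub>m
       msum m m (\<lambda>j. msum m m (\<lambda>i. (zeta nk ^ (j * i)) \<cdot>\<^sub>m ketbra (b j) (a i)) nk) nk'"

definition entangled :: "nat \<Rightarrow> (nat \<Rightarrow> complex vec) \<Rightarrow> nat \<Rightarrow> nat \<Rightarrow> complex vec" where
  "entangled m a nk i =
     complex_of_real (1 / sqrt (real nk)) \<cdot>\<^sub>v
       finsum_vec TYPE(complex) m (\<lambda>j. inverse (zeta nk ^ (j * i)) \<cdot>\<^sub>v a j) {0..<nk}"

definition ker_on :: "nat \<Rightarrow> complex mat \<Rightarrow> complex vec set \<Rightarrow> complex vec set" where
  "ker_on m A E = {v \<in> E. A *\<^sub>v v = 0\<^sub>v m}"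

end

theory Submission
  imports Defs
begin

(* In the basis |a_k>, Z_{k,k'} acts on E_k as the unitary discrete Fourier transform followed by
   truncation to the first n_{k'} coefficients (read off in the orthonormal basis |b_{k'}>), and the
   entangled vectors phi_a are the columns of the inverse transform. So a vector of E_k lies in
   ker Z iff its Fourier coefficients vanish below n_{k'}, i.e. iff it is the inverse transform of a
   coefficient vector supported on {n_{k'}, ..., n_k - 1}, i.e. iff it lies in the span of those
   phi_a. Finally ker Z^*Z = ker Z because <v, Z^*Z v> = |Z v|^2. *)

definition lincomb_vec ::
    "nat \<Rightarrow> (nat \<Rightarrow> 'a :: comm_ring_1 vec) \<Rightarrow> nat \<Rightarrow> (nat \<Rightarrow> 'a) \<Rightarrow> 'a vec" where
  "lincomb_vec m e n c = vec m (\<lambda>k. \<Sum>i\<in>{0..<n}. c i * e i $ k)"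

lemma lincomb_vec_carrier [simp]: "lincomb_vec m e n c \<in> carrier_vec m"
  and dim_lincomb_vec [simp]: "dim_vec (lincomb_vec m e n c) = m"
  by (simp_all add: lincomb_vec_def)

lemma lincomb_vec_cong:
  "(\<And>i. i < n \<Longrightarrow> c i = d i) \<Longrightarrow> lincomb_vec m e n c = lincomb_vec m e n d"
  unfolding lincomb_vec_def by (intro eq_vecI) (auto intro!: sum.cong)

lemma smult_lincomb_vec: "s \<cdot>\<^sub>v lincomb_vec m e n c = lincomb_vec m e n (\<lambda>i. s * c i)"
  unfolding lincomb_vec_def by (intro eq_vecI) (auto simp: sum_distrib_left mult.assoc)

lemma finsum_vec_smult_eq_lincomb_vec:
  assumes "\<forall>i<n. e i \<in> carrier_vec m"
  shows "finsum_vec TYPE('a :: comm_ring_1) m (\<lambda>i. c i \<cdot>\<^sub>v e i) {0..<n} = lincomb_vec m e n c"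
proof -
  have closed: "(\<lambda>i. c i \<cdot>\<^sub>v e i) \<in> {0..<n} \<rightarrow> carrier_vec m" using assms by auto
  show ?thesis
    by (rule eq_vecI) (use assms in \<open>auto simp: index_finsum_vec[OF _ _ closed] lincomb_vec_def
      finsum_vec_closed[OF closed, THEN carrier_vecD] intro!: sum.cong\<close>)
qed

lemma finsum_vec_smult_lincomb_vec:
  assumes "finite I"
  shows "finsum_vec TYPE('a :: comm_ring_1) m (\<lambda>l. d l \<cdot>\<^sub>v lincomb_vec m e n (f l)) I
     = lincomb_vec m e n (\<lambda>i. \<Sum>l\<in>I. d l * f l i)"
proof -
  have closed: "(\<lambda>l. d l \<cdot>\<^sub>v lincomb_vec m e n (f l)) \<in> I \<rightarrow> carrier_vec m" by auto
  show ?thesis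
  proof (rule eq_vecI)
    fix k assume "k < dim_vec (lincomb_vec m e n (\<lambda>i. \<Sum>l\<in>I. d l * f l i))"
    then have k: "k < m" by simp
    show "finsum_vec TYPE('a) m (\<lambda>l. d l \<cdot>\<^sub>v lincomb_vec m e n (f l)) I $ k
        = lincomb_vec m e n (\<lambda>i. \<Sum>l\<in>I. d l * f l i) $ k"
      unfolding index_finsum_vec[OF assms k closed] using k
      by (simp add: lincomb_vec_def sum_distrib_left sum_distrib_right sum.swap[of _ I] mult.assoc)
  qed (use finsum_vec_closed[OF closed] in simp)
qed

lemma cspan_eq_range_lincomb_vec:
  assumes "\<forall>i<n. e i \<in> carrier_vec m"
  shows "cspan m e {0..<n} = range (lincomb_vec m e n)"
  unfolding cspan_def finsum_vec_smult_eq_lincomb_vec[OF assms] by auto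

lemma orthonormal_fam_carrier: "orthonormal_fam m e n \<Longrightarrow> i < n \<Longrightarrow> e i \<in> carrier_vec m"
  unfolding orthonormal_fam_def by auto

lemma cscalar_prod_lincomb_vec:
  assumes o: "orthonormal_fam m e n" and i: "i < n"
  shows "lincomb_vec m e n c \<bullet>c e i = c i"
proof -
  have car: "\<And>l. l < n \<Longrightarrow> e l \<in> carrier_vec m" using orthonormal_fam_carrier[OF o] .
  have "lincomb_vec m e n c \<bullet>c e i = (\<Sum>k\<in>{0..<m}. (\<Sum>l\<in>{0..<n}. c l * e l $ k) * cnj (e i $ k))"
    unfolding scalar_prod_def lincomb_vec_def using car[OF i] by (auto intro!: sum.cong)
  also have "\<dots> = (\<Sum>l\<in>{0..<n}. c l * (\<Sum>k\<in>{0..<m}. e l $ k * cnj (e i $ k)))"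
    by (simp add: sum_distrib_left sum_distrib_right sum.swap[of _ "{0..<m}"] mult.assoc)
  also have "\<dots> = (\<Sum>l\<in>{0..<n}. c l * (e l \<bullet>c e i))"
    unfolding scalar_prod_def using car[OF i] by (auto intro!: sum.cong)
  also have "\<dots> = (\<Sum>l\<in>{0..<n}. if l = i then c l else 0)"
    using o i unfolding orthonormal_fam_def by (intro sum.cong) auto
  also have "\<dots> = c i" using i by simp
  finally show ?thesis .
qed

lemma lincomb_vec_eq_0_iff:
  assumes "orthonormal_fam m e n"
  shows "lincomb_vec m e n c = 0\<^sub>v m \<longleftrightarrow> (\<forall>i<n. c i = 0)"
proof
  assume zero: "lincomb_vec m e n c = 0\<^sub>v m"
  show "\<forall>i<n. c i = 0"
  proof (intro allI impI)
    fix i assume "i < n"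
    then have "c i = 0\<^sub>v m \<bullet>c e i"
      using cscalar_prod_lincomb_vec[OF assms] zero by metis
    then show "c i = 0"
      using orthonormal_fam_carrier[OF assms \<open>i < n\<close>] by simp
  qed
qed (rule eq_vecI, auto simp: lincomb_vec_def)

lemma zeta_power: "zeta n ^ k = cis (2 * pi * k / n)"
proof -
  have "zeta n = cis (2 * pi / n)"
    by (simp add: zeta_def cis_conv_exp mult.commute)
  then show ?thesis by (simp add: DeMoivre) (simp add: mult.commute)
qed

lemma zeta_power_self: "0 < n \<Longrightarrow> zeta n ^ n = 1"
  by (simp add: zeta_power)

lemma zeta_power_neq_1:
  assumes "0 < k" "k < n"
  shows "zeta n ^ k \<noteq> 1"
proof
  assume "zeta n ^ k = 1"
  then have "cos (2 * pi * k / n) = 1"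
    unfolding zeta_power by (metis cis.sel(1) one_complex.sel(1))
  then obtain N :: int where "2 * pi * k / n = N * 2 * pi" by (auto simp: cos_one_2pi_int)
  then have "int k = N * int n"
    using assms by (simp add: field_simps) (metis of_int_eq_iff of_int_mult of_int_of_nat_eq)
  then have "n dvd k" by (metis dvd_triv_right int_dvd_int_iff)
  with assms show False by (auto dest: dvd_imp_le)
qed

lemma zeta_power_inj:
  assumes "p < n" "q < n" "zeta n ^ p = zeta n ^ q"
  shows "p = q"
proof (rule ccontr)
  assume "p \<noteq> q"
  then obtain r s where rs: "r < s" "s < n" "zeta n ^ r = zeta n ^ s"
    using assms by (metis linorder_neqE_nat)
  then have "zeta n ^ r * zeta n ^ (s - r) = zeta n ^ r"
    by (metis le_add_diff_inverse less_imp_le power_add)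
  then have "zeta n ^ (s - r) = 1"
    by (simp add: zeta_def)
  moreover have "0 < s - r" "s - r < n" using rs by auto
  ultimately show False using zeta_power_neq_1 by blast
qed

lemma zeta_sum_orthogonal:
  assumes p: "p < n" and q: "q < n"
  shows "(\<Sum>l\<in>{0..<n}. zeta n ^ (l * p) * inverse (zeta n ^ (l * q)))
    = (if p = q then of_nat n else 0)"
proof -
  define w where "w = zeta n ^ p * inverse (zeta n ^ q)"
  have power_w: "zeta n ^ (l * p) * inverse (zeta n ^ (l * q)) = w ^ l" for l
    unfolding w_def by (simp add: power_mult_distrib power_mult[symmetric] mult.commute power_inverse)
  have "w ^ n = (zeta n ^ n) ^ p * inverse ((zeta n ^ n) ^ q)"
    unfolding w_def by (simp add: power_mult_distrib power_mult[symmetric] mult.commute power_inverse)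
  then have "w ^ n = 1" using zeta_power_self p by simp
  moreover have "w = 1 \<longleftrightarrow> p = q"
    using zeta_power_inj[OF p q] by (auto simp: w_def zeta_def field_simps)
  ultimately show ?thesis
    by (simp add: power_w atLeast0LessThan sum_gp_strict)
qed

(* Both transforms carry the factor n^(-1/2) of Z_{k,k'} and phi, which makes them mutually inverse. *)
definition dft :: "nat \<Rightarrow> (nat \<Rightarrow> complex) \<Rightarrow> nat \<Rightarrow> complex" where
  "dft n c j = complex_of_real (1 / sqrt n) * (\<Sum>i\<in>{0..<n}. zeta n ^ (j * i) * c i)"

definition idft :: "nat \<Rightarrow> (nat \<Rightarrow> complex) \<Rightarrow> nat \<Rightarrow> complex" where
  "idft n d i = complex_of_real (1 / sqrt n) * (\<Sum>l\<in>{0..<n}. inverse (zeta n ^ (i * l)) * d l)"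

lemma dft_cong: "(\<And>i. i < n \<Longrightarrow> c i = c' i) \<Longrightarrow> dft n c = dft n c'"
  unfolding dft_def by (intro ext arg_cong[where f = "(*) _"] sum.cong) auto

lemma dft_scale_square:
  "complex_of_real (1 / sqrt n) * complex_of_real (1 / sqrt n) = inverse (of_nat n)"
proof -
  have "1 / sqrt n * (1 / sqrt n) = inverse (real n)"
    by (simp add: inverse_eq_divide)
  then show ?thesis
    by (metis of_real_mult of_real_inverse of_real_of_nat_eq)
qed

lemma dft_idft:
  assumes "j < n"
  shows "dft n (idft n d) j = d j"
proof -
  have "dft n (idft n d) j
      = inverse (of_nat n) *
        (\<Sum>i\<in>{0..<n}. \<Sum>l\<in>{0..<n}. d l * (zeta n ^ (i * j) * inverse (zeta n ^ (i * l))))"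
    unfolding dft_def idft_def dft_scale_square[symmetric] by (simp add: sum_distrib_left mult_ac)
  also have "\<dots> = inverse (of_nat n) *
      (\<Sum>l\<in>{0..<n}. d l * (\<Sum>i\<in>{0..<n}. zeta n ^ (i * j) * inverse (zeta n ^ (i * l))))"
    by (subst sum.swap) (simp add: sum_distrib_left)
  also have "\<dots> = inverse (of_nat n) * (\<Sum>l\<in>{0..<n}. if l = j then d l * of_nat n else 0)"
    using assms by (intro arg_cong[where f = "(*) _"] sum.cong) (auto simp: zeta_sum_orthogonal)
  also have "\<dots> = d j"
    using assms by simp
  finally show ?thesis .
qed

lemma idft_dft:
  assumes "i < n"
  shows "idft n (dft n c) i = c i"
proof -
  have "idft n (dft n c) i
      = inverse (of_nat n) *
        (\<Sum>l\<in>{0..<n}. \<Sum>j\<in>{0..<n}. c j * (zeta n ^ (l * j) * inverse (zeta n ^ (l * i))))"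
    unfolding dft_def idft_def dft_scale_square[symmetric] by (simp add: sum_distrib_left mult_ac)
  also have "\<dots> = inverse (of_nat n) *
      (\<Sum>j\<in>{0..<n}. c j * (\<Sum>l\<in>{0..<n}. zeta n ^ (l * j) * inverse (zeta n ^ (l * i))))"
    by (subst sum.swap) (simp add: sum_distrib_left)
  also have "\<dots> = inverse (of_nat n) * (\<Sum>j\<in>{0..<n}. if j = i then c j * of_nat n else 0)"
    using assms by (intro arg_cong[where f = "(*) _"] sum.cong) (auto simp: zeta_sum_orthogonal)
  also have "\<dots> = c i"
    using assms by simp
  finally show ?thesis .
qed

lemma dft_vanishing_iff_idft:
  assumes "k \<le> n"
  shows "(\<forall>j<k. dft n c j = 0) \<longleftrightarrow> (\<exists>d. (\<forall>l<k. d l = 0) \<and> (\<forall>i<n. c i = idft n d i))"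
proof
  assume "\<forall>j<k. dft n c j = 0"
  then show "\<exists>d. (\<forall>l<k. d l = 0) \<and> (\<forall>i<n. c i = idft n d i)"
    using idft_dft by (intro exI[of _ "dft n c"]) simp
next
  assume "\<exists>d. (\<forall>l<k. d l = 0) \<and> (\<forall>i<n. c i = idft n d i)"
  then obtain d where d: "\<forall>l<k. d l = 0" and c: "\<forall>i<n. c i = idft n d i" by blast
  then have "dft n c = dft n (idft n d)" by (intro dft_cong) simp
  then show "\<forall>j<k. dft n c j = 0"
    using d assms dft_idft[of _ n d] by simp
qed

lemma msum_carrier [simp]: "msum nr nc f N \<in> carrier_mat nr nc"
proof -
  have "foldr (\<lambda>i acc. f i + acc) xs (0\<^sub>m nr nc) \<in> carrier_mat nr nc" for xs
    by (induction xs) (auto simp: plus_mat_def)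
  then show ?thesis unfolding msum_def .
qed

lemmas dim_msum [simp] = carrier_matD[OF msum_carrier]

lemma msum_eq_mat:
  assumes "\<forall>i<N. f i \<in> carrier_mat nr nc"
  shows "msum nr nc f N = mat nr nc (\<lambda>p. \<Sum>i\<in>{0..<N}. f i $$ p)"
proof -
  have "foldr (\<lambda>i acc. f i + acc) xs (0\<^sub>m nr nc) = mat nr nc (\<lambda>p. \<Sum>i\<leftarrow>xs. f i $$ p)"
    if "set xs \<subseteq> {0..<N}" for xs
    using that by (induction xs) (rule eq_matI; use assms in auto)+
  then show ?thesis
    unfolding msum_def by (simp add: sum_set_upt_conv_sum_list_nat[symmetric])
qed

lemma msum_mult_mat_vec:
  assumes f: "\<forall>i<N. f i \<in> carrier_mat nr nc" and v: "v \<in> carrier_vec nc"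
  shows "msum nr nc f N *\<^sub>v v = vec nr (\<lambda>r. \<Sum>i\<in>{0..<N}. (f i *\<^sub>v v) $ r)"
proof (rule eq_vecI)
  fix r assume "r < dim_vec (vec nr (\<lambda>r. \<Sum>i\<in>{0..<N}. (f i *\<^sub>v v) $ r))"
  then have r: "r < nr" by simp
  have "(msum nr nc f N *\<^sub>v v) $ r = (\<Sum>s\<in>{0..<nc}. (\<Sum>i\<in>{0..<N}. f i $$ (r, s)) * v $ s)"
    using r v by (auto simp: msum_eq_mat[OF f] scalar_prod_def intro!: sum.cong)
  also have "\<dots> = (\<Sum>i\<in>{0..<N}. \<Sum>s\<in>{0..<nc}. f i $$ (r, s) * v $ s)"
    by (simp add: sum_distrib_right) (rule sum.swap)
  also have "\<dots> = (\<Sum>i\<in>{0..<N}. (f i *\<^sub>v v) $ r)"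
    using f r v by (auto simp: scalar_prod_def intro!: sum.cong)
  finally show "(msum nr nc f N *\<^sub>v v) $ r = vec nr (\<lambda>r. \<Sum>i\<in>{0..<N}. (f i *\<^sub>v v) $ r) $ r"
    using r by simp
qed simp

lemma smult_mat_mult_vec:
  assumes "A \<in> carrier_mat nr nc" "v \<in> carrier_vec nc"
  shows "(k \<cdot>\<^sub>m A) *\<^sub>v v = k \<cdot>\<^sub>v (A *\<^sub>v (v :: 'a :: comm_ring_1 vec))"
  using assms by (intro eq_vecI) (auto simp: scalar_prod_def sum_distrib_left mult.assoc)

lemma ketbra_carrier: "ketbra x y \<in> carrier_mat (dim_vec x) (dim_vec y)"
  by (simp add: ketbra_def)

lemma ketbra_mult_vec:
  assumes "v \<in> carrier_vec (dim_vec y)"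
  shows "ketbra x y *\<^sub>v v = (v \<bullet>c y) \<cdot>\<^sub>v x"
  using assms by (intro eq_vecI)
    (auto simp: ketbra_def scalar_prod_def sum_distrib_left sum_distrib_right mult_ac intro!: sum.cong)

lemma transition_op_mult_vec:
  assumes a: "\<forall>i<nk. a i \<in> carrier_vec m" and b: "\<forall>j<nk'. b j \<in> carrier_vec m"
    and v: "v \<in> carrier_vec m"
  shows "transition_op m a nk b nk' *\<^sub>v v = lincomb_vec m b nk' (dft nk (\<lambda>i. v \<bullet>c a i))"
proof -
  let ?K = "\<lambda>j i. zeta nk ^ (j * i) \<cdot>\<^sub>m ketbra (b j) (a i)"
  have K_carrier: "?K j i \<in> carrier_mat m m" if "j < nk'" "i < nk" for i j
    using ketbra_carrier[of "b j" "a i"] a b that by auto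
  have K_apply: "?K j i *\<^sub>v v = (zeta nk ^ (j * i) * (v \<bullet>c a i)) \<cdot>\<^sub>v b j"
    if "j < nk'" "i < nk" for i j
    using ketbra_carrier[of "b j" "a i"] a b v that
    by (auto simp: smult_mat_mult_vec ketbra_mult_vec smult_smult_assoc)
  have row_apply: "msum m m (?K j) nk *\<^sub>v v
      = vec m (\<lambda>r. \<Sum>i\<in>{0..<nk}. zeta nk ^ (j * i) * (v \<bullet>c a i) * b j $ r)" if "j < nk'" for j
  proof -
    have "msum m m (?K j) nk *\<^sub>v v = vec m (\<lambda>r. \<Sum>i\<in>{0..<nk}. (?K j i *\<^sub>v v) $ r)"
      using K_carrier that v by (simp add: msum_mult_mat_vec)
    also have "\<dots> = vec m (\<lambda>r. \<Sum>i\<in>{0..<nk}. zeta nk ^ (j * i) * (v \<bullet>c a i) * b j $ r)"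
      by (rule eq_vecI) (use K_apply b that in \<open>auto intro!: sum.cong\<close>)
    finally show ?thesis .
  qed
  have "transition_op m a nk b nk' *\<^sub>v v
      = complex_of_real (1 / sqrt nk) \<cdot>\<^sub>v vec m (\<lambda>r. \<Sum>j\<in>{0..<nk'}. (msum m m (?K j) nk *\<^sub>v v) $ r)"
    unfolding transition_op_def smult_mat_mult_vec[OF msum_carrier v]
    by (simp add: msum_mult_mat_vec[OF _ v])
  also have "\<dots> = lincomb_vec m b nk' (dft nk (\<lambda>i. v \<bullet>c a i))"
    by (rule eq_vecI)
      (simp_all add: row_apply lincomb_vec_def dft_def sum_distrib_left sum_distrib_right mult_ac)
  finally show ?thesis .
qed

lemma mat_adjoint_carrier: "A \<in> carrier_mat n k \<Longrightarrow> mat_adjoint A \<in> carrier_mat k n"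
  unfolding mat_adjoint_def by auto

lemma cscalar_prod_mat_adjoint:
  fixes A :: "complex mat"
  assumes A: "A \<in> carrier_mat n k" and v: "v \<in> carrier_vec k" and w: "w \<in> carrier_vec n"
  shows "v \<bullet>c (mat_adjoint A *\<^sub>v w) = (A *\<^sub>v v) \<bullet>c w"
proof -
  have adj: "mat_adjoint A \<in> carrier_mat k n"
    using A by (rule mat_adjoint_carrier)
  have adj_entry: "mat_adjoint A $$ (j, i) = cnj (A $$ (i, j))" if "j < k" "i < n" for i j
    using A that by (simp add: mat_adjoint_def mat_of_rows_def)
  have "v \<bullet>c (mat_adjoint A *\<^sub>v w)
      = (\<Sum>j\<in>{0..<k}. \<Sum>i\<in>{0..<n}. A $$ (i, j) * v $ j * cnj (w $ i))"
    using adj adj_entry v w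
    by (auto simp: scalar_prod_def sum_distrib_left mult_ac intro!: sum.cong)
  also have "\<dots> = (\<Sum>i\<in>{0..<n}. \<Sum>j\<in>{0..<k}. A $$ (i, j) * v $ j * cnj (w $ i))"
    by (rule sum.swap)
  also have "\<dots> = (A *\<^sub>v v) \<bullet>c w"
    using A v w by (auto simp: scalar_prod_def sum_distrib_right intro!: sum.cong)
  finally show ?thesis .
qed

lemma mat_adjoint_mult_mult_vec_eq_0_iff:
  fixes A :: "complex mat"
  assumes A: "A \<in> carrier_mat n k" and v: "v \<in> carrier_vec k"
  shows "(mat_adjoint A * A) *\<^sub>v v = 0\<^sub>v k \<longleftrightarrow> A *\<^sub>v v = 0\<^sub>v n"
proof -
  have adj: "mat_adjoint A \<in> carrier_mat k n"
    using A by (rule mat_adjoint_carrier)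
  then have assoc: "(mat_adjoint A * A) *\<^sub>v v = mat_adjoint A *\<^sub>v (A *\<^sub>v v)"
    using A v by simp
  show ?thesis
  proof
    assume "(mat_adjoint A * A) *\<^sub>v v = 0\<^sub>v k"
    then have "(A *\<^sub>v v) \<bullet>c (A *\<^sub>v v) = 0"
      using cscalar_prod_mat_adjoint[OF A v, of "A *\<^sub>v v"] assoc A v by simp
    then show "A *\<^sub>v v = 0\<^sub>v n"
      using conjugate_square_eq_0_vec[OF mult_mat_vec_carrier[OF A v]] by simp
  qed (use assoc adj in auto)
qed

lemma ker_on_mat_adjoint_mult:
  assumes "A \<in> carrier_mat m m" and "E \<subseteq> carrier_vec m"
  shows "ker_on m (mat_adjoint A * A) E = ker_on m A E"
  using assms mat_adjoint_mult_mult_vec_eq_0_iff[OF assms(1)] by (auto simp: ker_on_def)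

lemma ker_on_transition_op:
  assumes a: "orthonormal_fam m a nk" and b: "orthonormal_fam m b nk'"
  shows "ker_on m (transition_op m a nk b nk') (cspan m a {0..<nk})
    = lincomb_vec m a nk ` {c. \<forall>j<nk'. dft nk c j = 0}"
proof -
  have "transition_op m a nk b nk' *\<^sub>v lincomb_vec m a nk c = lincomb_vec m b nk' (dft nk c)" for c
    using orthonormal_fam_carrier[OF a] orthonormal_fam_carrier[OF b]
    by (simp add: transition_op_mult_vec cscalar_prod_lincomb_vec[OF a] cong: dft_cong)
  then show ?thesis
    using orthonormal_fam_carrier[OF a]
    by (auto simp: ker_on_def cspan_eq_range_lincomb_vec lincomb_vec_eq_0_iff[OF b])
qed

lemma entangled_eq_lincomb_vec:
  assumes "\<forall>i<nk. a i \<in> carrier_vec m"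
  shows "entangled m a nk l
    = lincomb_vec m a nk (\<lambda>j. complex_of_real (1 / sqrt nk) * inverse (zeta nk ^ (j * l)))"
  unfolding entangled_def finsum_vec_smult_eq_lincomb_vec[OF assms] smult_lincomb_vec ..

lemma cspan_entangled:
  assumes a: "\<forall>i<nk. a i \<in> carrier_vec m"
  shows "cspan m (entangled m a nk) {k..<nk}
    = lincomb_vec m a nk ` idft nk ` {d. \<forall>l<k. d l = 0}"
proof -
  define F where
    "F d i = (\<Sum>l\<in>{k..<nk}. d l * (complex_of_real (1 / sqrt nk) * inverse (zeta nk ^ (i * l))))"
    for d i
  have idft_eq_F: "idft nk d = F d" if "\<forall>l<k. d l = 0" for d
    unfolding idft_def F_def using that
    by (intro ext) (auto simp: sum_distrib_left mult_ac intro: sum.mono_neutral_right)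
  have "idft nk ` {d. \<forall>l<k. d l = 0} = range F"
  proof (intro equalityI subsetI)
    fix f assume "f \<in> range F"
    then obtain d where "f = F d" by blast
    also have "\<dots> = F (\<lambda>l. if k \<le> l then d l else 0)"
      unfolding F_def by (intro ext sum.cong) auto
    also have "\<dots> = idft nk (\<lambda>l. if k \<le> l then d l else 0)"
      by (rule idft_eq_F[symmetric]) simp
    finally show "f \<in> idft nk ` {d. \<forall>l<k. d l = 0}" by auto
  qed (use idft_eq_F in auto)
  moreover have "cspan m (entangled m a nk) {k..<nk} = lincomb_vec m a nk ` range F"
    unfolding cspan_def entangled_eq_lincomb_vec[OF a]
      finsum_vec_smult_lincomb_vec[OF finite_atLeastLessThan] F_def by auto
  ultimately show ?thesis by simp
qed

theorem corollary2p5: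
  fixes m nk nk' :: nat and a b :: "nat \<Rightarrow> complex vec"
  assumes "orthonormal_fam m a nk"
    and "orthonormal_fam m b nk'"
    and "\<forall>i<nk. \<forall>j<nk'. a i \<bullet>c b j = 0"
    and "nk' \<le> nk"
  shows "ker_on m (mat_adjoint (transition_op m a nk b nk') * transition_op m a nk b nk')
            (cspan m a {0..<nk})
         = ker_on m (transition_op m a nk b nk') (cspan m a {0..<nk})
       \<and> ker_on m (transition_op m a nk b nk') (cspan m a {0..<nk})
         = cspan m (entangled m a nk) {nk'..<nk}"
proof -
  note a = assms(1) and b = assms(2) and le = assms(4)
  let ?T = "transition_op m a nk b nk'" and ?E = "cspan m a {0..<nk}"
  have a_carrier: "\<forall>i<nk. a i \<in> carrier_vec m"
    using orthonormal_fam_carrier[OF a] by blast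
  have "?T \<in> carrier_mat m m" by (simp add: transition_op_def)
  moreover have "?E \<subseteq> carrier_vec m"
    using cspan_eq_range_lincomb_vec[OF a_carrier] by auto
  ultimately have adjoint: "ker_on m (mat_adjoint ?T * ?T) ?E = ker_on m ?T ?E"
    by (rule ker_on_mat_adjoint_mult)
  have "lincomb_vec m a nk ` {c. \<forall>j<nk'. dft nk c j = 0}
      = lincomb_vec m a nk ` idft nk ` {d. \<forall>l<nk'. d l = 0}"
  proof (intro equalityI image_subsetI)
    fix c assume "c \<in> {c. \<forall>j<nk'. dft nk c j = 0}"
    then obtain d where "\<forall>l<nk'. d l = 0" and "\<forall>i<nk. c i = idft nk d i"
      using dft_vanishing_iff_idft[OF le] by auto
    then show "lincomb_vec m a nk c \<in> lincomb_vec m a nk ` idft nk ` {d. \<forall>l<nk'. d l = 0}"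
      using lincomb_vec_cong[of nk c "idft nk d"] by blast
  next
    fix c assume "c \<in> idft nk ` {d. \<forall>l<nk'. d l = 0}"
    then have "\<forall>j<nk'. dft nk c j = 0"
      using dft_vanishing_iff_idft[OF le, of c] by auto
    then show "lincomb_vec m a nk c \<in> lincomb_vec m a nk ` {c. \<forall>j<nk'. dft nk c j = 0}"
      by blast
  qed
  then show ?thesis
    using adjoint ker_on_transition_op[OF a b] cspan_entangled[OF a_carrier] by simp
qed

end
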